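(* Let $m,d',h,c$ be positive integers with $h\le d'$, and let $f:\{0,1\}^{L_{d'}}\to\{0,1\}$ be a function whose value is affected by only $m$ of its inputs. Let $f'=f\circ\Phi_{d'}\circ\Phi_{d'-1}\circ\cdots\circ\Phi_{d'-h+1}$ (with the random maps $\Phi_j$ independent). Then with probability at least $1-(m\theta^h)^c$, fewer than $c$ inputs affect the value of $f'$.
   Context: Fix $k\ge2$ and $0\le\theta<1$. $L_r$ is the set of depth-$r$ vertices of the complete $k$-ary tree, and $\mathrm{parent}(v)$ is the parent of $v$. $R_\theta$ is the distribution on $\{0,1,*\}$ giving $0$ and $1$ each probability $(1-\theta)/2$ and $*$ probability $\theta$. For $j\ge1$, $\Phi_j:\{0,1\}^{L_{j-1}}\to\{0,1\}^{L_j}$ is the random map defined by drawing $r\in\{0,1,*\}^{L_j}$ with i.i.d. $R_\theta$ coordinates and setting $(\Phi_j(x))_v=r_v$ if $r_v\in\{0,1\}$ and $(\Phi_j(x))_v=x_{\mathrm{parent}(v)}$ if $r_v=*$. An input affects a function if the function's value depends on it. *)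

theory Defs
  imports "HOL-Probability.Probability"
begin

text \<open>Vertices of the complete k-ary tree are lists over {0..<k}; the depth is the
length; the parent of a vertex removes its last entry.\<close>

definition L :: "nat \<Rightarrow> nat \<Rightarrow> nat list set" where
  "L k r = {v. length v = r \<and> set v \<subseteq> {..<k}}"

definition parent :: "nat list \<Rightarrow> nat list" where
  "parent v = butlast v"

text \<open>Elements of {0,1}^(L_r): boolean functions that are False outside L_r.\<close>

definition Lfun :: "nat \<Rightarrow> nat \<Rightarrow> (nat list \<Rightarrow> bool) set" where
  "Lfun k r = {x. \<forall>v. v \<notin> L k r \<longrightarrow> x v = False}"

definition affects :: "nat \<Rightarrow> nat \<Rightarrow> ((nat list \<Rightarrow> bool) \<Rightarrow> bool) \<Rightarrow> nat list \<Rightarrow> bool" where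
  "affects k r g v \<longleftrightarrow> v \<in> L k r \<and> (\<exists>x\<in>Lfun k r. g x \<noteq> g (x(v := \<not> x v)))"

datatype rval = R0 | R1 | Star

definition R :: "real \<Rightarrow> rval pmf" where
  "R \<theta> = bind_pmf (bernoulli_pmf \<theta>)
     (\<lambda>b. if b then return_pmf Star
          else map_pmf (\<lambda>c. if c then R1 else R0) (bernoulli_pmf (1/2)))"

definition Phi :: "nat \<Rightarrow> (nat \<times> nat list \<Rightarrow> rval) \<Rightarrow> nat \<Rightarrow> (nat list \<Rightarrow> bool) \<Rightarrow> (nat list \<Rightarrow> bool)" where
  "Phi k \<rho> j x = (\<lambda>v. if v \<in> L k j then
      (case \<rho> (j, v) of R0 \<Rightarrow> False | R1 \<Rightarrow> True | Star \<Rightarrow> x (parent v))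
    else False)"

text \<open>phis k rho j n = Phi_(j+n) o ... o Phi_(j+1).\<close>

fun phis :: "nat \<Rightarrow> (nat \<times> nat list \<Rightarrow> rval) \<Rightarrow> nat \<Rightarrow> nat \<Rightarrow> (nat list \<Rightarrow> bool) \<Rightarrow> (nat list \<Rightarrow> bool)" where
  "phis k \<rho> j 0 x = x"
| "phis k \<rho> j (Suc n) x = Phi k \<rho> (j + Suc n) (phis k \<rho> j n x)"

definition seed_pmf :: "nat \<Rightarrow> real \<Rightarrow> nat \<Rightarrow> nat \<Rightarrow> (nat \<times> nat list \<Rightarrow> rval) pmf" where
  "seed_pmf k \<theta> d' h =
     Pi_pmf {(j, v). d' - h < j \<and> j \<le> d' \<and> v \<in> L k j} Star (\<lambda>_. R \<theta>)"

end

theory Submission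
  imports Defs
begin

text \<open>If an input u on level d' - h matters for f after the h random maps, then flipping u
changes the composed map at some input v of f that affects f, and a change at u can only
reach v if every vertex on the path from u down to v (excluding u) drew a \<open>*\<close>. So the
affecting inputs of the composition are ancestors of affecting inputs of f with an
all-\<open>*\<close> path below them. For c affecting inputs of f with pairwise distinct ancestors
these paths are disjoint, so all of them are \<open>*\<close> with probability \<theta>^(c h); there are at
most m^c such sets of inputs, and the union bound gives the claim.\<close>

definition star_path :: "nat \<Rightarrow> nat \<Rightarrow> (nat \<times> nat list \<Rightarrow> rval) \<Rightarrow> nat list \<Rightarrow> bool" where
  "star_path j d \<rho> v \<longleftrightarrow> (\<forall>i. j < i \<and> i \<le> d \<longrightarrow> \<rho> (i, take i v) = Star)"

lemma finite_L: "finite (L k r)"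
proof -
  have "L k r = {xs. set xs \<subseteq> {..<k} \<and> length xs = r}" by (auto simp: L_def)
  then show ?thesis using finite_lists_length_eq[of "{..<k}" r] by simp
qed

lemma take_in_L: "v \<in> L k d \<Longrightarrow> i \<le> d \<Longrightarrow> take i v \<in> L k i"
  by (auto simp: L_def dest: in_set_takeD)

lemma phis_Suc_in_Lfun: "phis k \<rho> j (Suc n) x \<in> Lfun k (j + Suc n)"
  by (auto simp: Lfun_def Phi_def)

lemma phis_differ_imp_star_path:
  assumes "v \<in> L k (j + n)" and "phis k \<rho> j n x v \<noteq> phis k \<rho> j n y v"
  shows "star_path j (j + n) \<rho> v \<and> x (take j v) \<noteq> y (take j v)"
  using assms
proof (induction n arbitrary: v)
  case 0
  then show ?case by (auto simp: L_def star_path_def)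
next
  case (Suc n)
  have len: "length v = j + Suc n" using Suc.prems(1) by (auto simp: L_def)
  have parent_L: "parent v \<in> L k (j + n)"
    using Suc.prems(1) by (auto simp: L_def parent_def dest: in_set_butlastD)
  have star: "\<rho> (j + Suc n, v) = Star"
    using Suc.prems by (cases "\<rho> (j + Suc n, v)") (auto simp: Phi_def)
  then have "phis k \<rho> j n x (parent v) \<noteq> phis k \<rho> j n y (parent v)"
    using Suc.prems by (auto simp: Phi_def)
  from Suc.IH[OF parent_L this]
  have "star_path j (j + n) \<rho> (parent v)" "x (take j (parent v)) \<noteq> y (take j (parent v))"
    by auto
  moreover have "take i (parent v) = take i v" if "i \<le> j + n" for i
    using len that by (simp add: parent_def take_butlast)
  ultimately show ?case
    using star len by (auto simp: star_path_def le_Suc_eq)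
qed

lemma eq_if_eq_on_affecting_inputs:
  assumes "x \<in> Lfun k r" "y \<in> Lfun k r" "\<And>v. affects k r f v \<Longrightarrow> x v = y v"
  shows "f x = f y"
proof -
  have "f x = f y"
    if "finite D" "{v. x v \<noteq> y v} = D" "x \<in> Lfun k r" "\<forall>v\<in>D. \<not> affects k r f v" for D x
    using that
  proof (induction D arbitrary: x rule: finite_induct)
    case empty
    then show ?case by (auto simp: fun_eq_iff)
  next
    case (insert a D)
    have "x a \<noteq> y a" using insert.prems(1) by auto
    then have a_L: "a \<in> L k r"
      using insert.prems(2) \<open>y \<in> Lfun k r\<close> by (auto simp: Lfun_def)
    define x' where "x' = x(a := \<not> x a)"
    have "{v. x' v \<noteq> y v} = D"
      using insert.prems(1) insert.hyps(2) \<open>x a \<noteq> y a\<close> by (auto simp: x'_def)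
    moreover have "x' \<in> Lfun k r" using insert.prems(2) a_L by (auto simp: Lfun_def x'_def)
    ultimately have "f x' = f y" using insert.IH insert.prems(3) by auto
    moreover have "f x = f x'"
      using insert.prems(2,3) a_L unfolding affects_def x'_def by auto
    ultimately show ?case by simp
  qed
  moreover have "{v. x v \<noteq> y v} \<subseteq> L k r" using assms(1,2) by (auto simp: Lfun_def)
  then have "finite {v. x v \<noteq> y v}" using finite_L finite_subset by blast
  ultimately show ?thesis using assms by blast
qed

lemma affects_phis_imp_star_path:
  assumes "affects k j (\<lambda>x. f (phis k \<rho> j n x)) u" and "n > 0"
  obtains v where "affects k (j + n) f v" "star_path j (j + n) \<rho> v" "take j v = u"
proof -
  obtain x where "x \<in> Lfun k j"
    and changes: "f (phis k \<rho> j n x) \<noteq> f (phis k \<rho> j n (x(u := \<not> x u)))"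
    using assms(1) by (auto simp: affects_def)
  obtain n' where n: "n = Suc n'" using assms(2) gr0_implies_Suc by blast
  obtain v where v: "affects k (j + n) f v"
    and differ: "phis k \<rho> j n x v \<noteq> phis k \<rho> j n (x(u := \<not> x u)) v"
    using eq_if_eq_on_affecting_inputs[of _ k "j + n"] changes phis_Suc_in_Lfun n by metis
  have "v \<in> L k (j + n)" using v by (auto simp: affects_def)
  from phis_differ_imp_star_path[OF this differ] v that show ?thesis
    by (auto split: if_splits)
qed

lemma obtain_subset_inj_on_with_card:
  assumes "c \<le> card (g ` A)" and "finite A"
  obtains T where "T \<subseteq> A" "card T = c" "inj_on g T"
proof -
  obtain T' where T': "T' \<subseteq> g ` A" "card T' = c"
    using assms(1) obtain_subset_with_card_n by metis
  define T where "T = inv_into A g ` T'"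
  have "T \<subseteq> A" using T'(1) by (auto simp: T_def intro: inv_into_into)
  moreover have "card T = c"
    using card_image[OF inj_on_inv_into[OF T'(1)]] T'(2) by (simp add: T_def)
  moreover have "inj_on g T"
    using T'(1) by (auto simp: T_def inj_on_def f_inv_into_f subset_iff)
  ultimately show ?thesis using that by blast
qed

lemma card_subsets_le_power:
  assumes "finite S"
  shows "card {T. T \<subseteq> S \<and> card T = c} \<le> card S ^ c"
  using assms by (cases "c \<le> card S") (simp_all add: n_subsets binomial_le_pow binomial_eq_0)

lemma pmf_R_Star: "0 \<le> \<theta> \<Longrightarrow> \<theta> \<le> 1 \<Longrightarrow> pmf (R \<theta>) Star = \<theta>"
  by (simp add: R_def pmf_bind pmf_map vimage_def)

lemma prob_Pi_pmf_R_all_Star: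
  assumes "finite I" "J \<subseteq> I" "0 \<le> \<theta>" "\<theta> \<le> 1"
  shows "measure_pmf.prob (Pi_pmf I Star (\<lambda>_. R \<theta>)) {\<rho>. \<forall>i\<in>J. \<rho> i = Star} = \<theta> ^ card J"
proof -
  define B where "B = (\<lambda>i. if i \<in> J then {Star} else UNIV)"
  have "{\<rho>. \<forall>i\<in>J. \<rho> i = Star} = Pi I B" using assms(2) by (auto simp: B_def Pi_def)
  then have "measure_pmf.prob (Pi_pmf I Star (\<lambda>_. R \<theta>)) {\<rho>. \<forall>i\<in>J. \<rho> i = Star}
      = (\<Prod>i\<in>I. measure_pmf.prob (R \<theta>) (B i))"
    using measure_Pi_pmf_Pi[OF assms(1)] by simp
  also have "\<dots> = (\<Prod>i\<in>I. if i \<in> J then \<theta> else 1)"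
    by (intro prod.cong) (auto simp: B_def measure_pmf_single pmf_R_Star assms)
  also have "\<dots> = \<theta> ^ card J"
    using assms(1,2) by (simp add: prod.If_cases Int_absorb1)
  finally show ?thesis .
qed

lemma prob_star_paths:
  assumes "T \<subseteq> L k (j + h)" "inj_on (take j) T" "0 \<le> \<theta>" "\<theta> \<le> 1"
  shows "measure_pmf.prob (seed_pmf k \<theta> (j + h) h) {\<rho>. \<forall>v\<in>T. star_path j (j + h) \<rho> v}
           = \<theta> ^ (card T * h)"
proof -
  define I where "I = {(i, v). j < i \<and> i \<le> j + h \<and> v \<in> L k i}"
  define J where "J = (\<lambda>(v, i). (i, take i v)) ` (T \<times> {j<..j + h})"
  have "I \<subseteq> {..j + h} \<times> (\<Union>i\<le>j + h. L k i)" by (auto simp: I_def)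
  moreover have "finite ({..j + h} \<times> (\<Union>i\<le>j + h. L k i))" by (simp add: finite_L)
  ultimately have "finite I" by (rule finite_subset)
  have "J \<subseteq> I"
  proof
    fix z assume "z \<in> J"
    then obtain v i where "z = (i, take i v)" "v \<in> T" "j < i" "i \<le> j + h"
      by (auto simp: J_def)
    then show "z \<in> I" using assms(1) take_in_L[of v k "j + h" i] by (auto simp: I_def)
  qed
  \<comment> \<open>distinct vertices of T already differ at depth j, hence on every deeper prefix\<close>
  have "inj_on (\<lambda>(v, i). (i, take i v)) (T \<times> {j<..j + h})"
  proof (rule inj_onI, clarsimp)
    fix v i w
    assume "v \<in> T" "w \<in> T" "j < i" "take i v = take i w"
    then have "take j (take i v) = take j (take i w)" by simp
    then have "take j v = take j w" using \<open>j < i\<close> by (simp add: min_def)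
    then show "v = w" using assms(2) \<open>v \<in> T\<close> \<open>w \<in> T\<close> by (auto dest: inj_onD)
  qed
  then have "card J = card T * h"
    unfolding J_def by (simp add: card_image card_cartesian_product)
  moreover have "{\<rho>. \<forall>v\<in>T. star_path j (j + h) \<rho> v} = {\<rho>. \<forall>i\<in>J. \<rho> i = Star}"
    by (auto simp: star_path_def J_def)
  moreover have "seed_pmf k \<theta> (j + h) h = Pi_pmf I Star (\<lambda>_. R \<theta>)"
    by (simp add: seed_pmf_def I_def)
  ultimately show ?thesis
    using prob_Pi_pmf_R_all_Star[OF \<open>finite I\<close> \<open>J \<subseteq> I\<close> assms(3,4)] by simp
qed

lemma prob_many_affecting_inputs_le:
  assumes "0 < h" "0 \<le> \<theta>" "\<theta> \<le> 1"
  shows "measure_pmf.prob (seed_pmf k \<theta> (j + h) h)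
           {\<rho>. c \<le> card {u. affects k j (\<lambda>x. f (phis k \<rho> j h x)) u}}
         \<le> real (card {v. affects k (j + h) f v}) ^ c * \<theta> ^ (c * h)"
proof -
  let ?p = "seed_pmf k \<theta> (j + h) h"
  define S where "S = {v. affects k (j + h) f v}"
  define TT where "TT = {T. T \<subseteq> S \<and> card T = c \<and> inj_on (take j) T}"
  define F where "F T = {\<rho>. \<forall>v\<in>T. star_path j (j + h) \<rho> v}" for T
  have "S \<subseteq> L k (j + h)" by (auto simp: S_def affects_def)
  then have "finite S" using finite_L finite_subset by blast
  have bad_subset: "{\<rho>. c \<le> card {u. affects k j (\<lambda>x. f (phis k \<rho> j h x)) u}} \<subseteq> (\<Union>T\<in>TT. F T)"
  proof
    fix \<rho> assume "\<rho> \<in> {\<rho>. c \<le> card {u. affects k j (\<lambda>x. f (phis k \<rho> j h x)) u}}"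
    moreover define A where "A = {v\<in>S. star_path j (j + h) \<rho> v}"
    have "{u. affects k j (\<lambda>x. f (phis k \<rho> j h x)) u} \<subseteq> take j ` A"
      using affects_phis_imp_star_path[of k j f \<rho> h] assms(1) by (auto simp: A_def S_def)
    moreover have "finite A" using \<open>finite S\<close> by (simp add: A_def)
    ultimately have "c \<le> card (take j ` A)"
      by (metis card_mono finite_imageI mem_Collect_eq le_trans)
    then obtain T where "T \<subseteq> A" "card T = c" "inj_on (take j) T"
      using obtain_subset_inj_on_with_card \<open>finite A\<close> by metis
    then show "\<rho> \<in> (\<Union>T\<in>TT. F T)" by (auto simp: TT_def F_def A_def)
  qed
  have "finite TT" using \<open>finite S\<close> by (simp add: TT_def)
  have "card TT \<le> card {T. T \<subseteq> S \<and> card T = c}"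
    using \<open>finite S\<close> by (intro card_mono) (auto simp: TT_def)
  also have "\<dots> \<le> card S ^ c" using card_subsets_le_power[OF \<open>finite S\<close>] .
  finally have card_TT: "card TT \<le> card S ^ c" .
  have "measure_pmf.prob ?p {\<rho>. c \<le> card {u. affects k j (\<lambda>x. f (phis k \<rho> j h x)) u}}
      \<le> measure_pmf.prob ?p (\<Union>T\<in>TT. F T)"
    using bad_subset by (intro measure_pmf.finite_measure_mono) auto
  also have "\<dots> \<le> (\<Sum>T\<in>TT. measure_pmf.prob ?p (F T))"
    using \<open>finite TT\<close> by (intro measure_pmf.finite_measure_subadditive_finite) auto
  also have "\<dots> = (\<Sum>T\<in>TT. \<theta> ^ (c * h))"
    using prob_star_paths[of _ k j h \<theta>] \<open>S \<subseteq> L k (j + h)\<close> assms(2,3)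
    by (intro sum.cong) (auto simp: TT_def F_def)
  also have "\<dots> = real (card TT) * \<theta> ^ (c * h)" by simp
  also have "\<dots> \<le> real (card S) ^ c * \<theta> ^ (c * h)"
    using card_TT assms(2) by (simp add: mult_right_mono flip: of_nat_power)
  finally show ?thesis by (simp only: S_def)
qed

theorem mainTheorem14:
  fixes k m d' h c :: nat and \<theta> :: real and f :: "(nat list \<Rightarrow> bool) \<Rightarrow> bool"
  assumes "k \<ge> 2" and "0 \<le> \<theta>" and "\<theta> < 1"
    and "m > 0" and "d' > 0" and "h > 0" and "c > 0" and "h \<le> d'"
    and "card {v. affects k d' f v} \<le> m"
  shows "measure_pmf.prob (seed_pmf k \<theta> d' h)
           {\<rho>. card {v. affects k (d' - h) (\<lambda>x. f (phis k \<rho> (d' - h) h x)) v} < c}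
         \<ge> 1 - (real m * \<theta> ^ h) ^ c"
proof -
  define j where "j = d' - h"
  have d': "d' = j + h" using assms(8) by (simp add: j_def)
  let ?p = "seed_pmf k \<theta> d' h"
  let ?good = "{\<rho>. card {v. affects k (d' - h) (\<lambda>x. f (phis k \<rho> (d' - h) h x)) v} < c}"
  have "measure_pmf.prob ?p (- ?good)
      \<le> real (card {v. affects k d' f v}) ^ c * \<theta> ^ (c * h)"
    using prob_many_affecting_inputs_le[of h \<theta> k j c f] assms
    unfolding j_def[symmetric] d' by (simp add: Compl_eq not_less)
  also have "\<dots> \<le> real m ^ c * \<theta> ^ (c * h)"
    using assms(2,9) by (intro mult_right_mono power_mono) auto
  also have "\<dots> = (real m * \<theta> ^ h) ^ c"
    by (simp add: power_mult_distrib mult.commute flip: power_mult)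
  finally show ?thesis
    using measure_pmf.prob_compl[of ?good ?p] by (simp add: Compl_eq_Diff_UNIV)
qed

end
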